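(* Consider the discrete-time linear system $x_{k+1} = Ax_k + Bu_k + w_k$, $k\in\mathbb{N}$, with $x_k\in\mathbb{R}^n$, $u_k\in\mathbb{R}^m$, $x_0 = 0$, $(A,B)$ controllable, and i.i.d. process noise $w_k\sim N(0,W)$ with $W\succ 0$. Let $K_0, K_1\in\mathbb{R}^{m\times n}$ be arbitrary gains with $\rho(A+BK_0)<1$ (no assumption on $K_1$), and let $M>0$ and $t\in\mathbb{N}^*$. Let the input be generated by the following switched controller: a counter $\xi_k$ starts at $\xi_0=0$; at step $k$, if $\xi_k>0$ then $u_k = K_0x_k$ and $\xi_{k+1}=\xi_k-1$; if $\xi_k=0$ and $\|x_k\|\ge M$ then $u_k=K_0x_k$ and $\xi_{k+1}=t-1$; if $\xi_k=0$ and $\|x_k\|<M$ then $u_k=K_1x_k$ and $\xi_{k+1}=0$. Let $P_0\succ 0$ and $0<\rho_0<1$ satisfy $(A+BK_0)^TP_0(A+BK_0)\prec \rho_0 P_0$, and let $V_{0,k} = x_k^TP_0x_k$. Then for every $k\in\mathbb{N}$, $$\mathbb{E} V_{0,k} < \frac{M^2\mathcal{A}^2\|P_0\| + \operatorname{tr}(WP_0)}{1-\rho_0},$$ where $\mathcal{A} = \max\{\|A+BK_0\|, \|A+BK_1\|\}$.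
   Context: $\rho(\cdot)$ is the spectral radius, $\|\cdot\|$ is the Euclidean norm for vectors and the induced 2-norm (largest singular value) for matrices. The switched controller applies the fallback gain $K_0$ for $t$ consecutive steps each time, while the primary gain is active, the state norm reaches the threshold $M$. *)

theory Defs
  imports "HOL-Analysis.Analysis" "HOL-Probability.Probability"
begin

definition posdef :: "real^'n^'n \<Rightarrow> bool" where
  "posdef P \<longleftrightarrow> transpose P = P \<and> (\<forall>x. x \<noteq> 0 \<longrightarrow> x \<bullet> (P *v x) > 0)"

definition mnorm :: "real^'n^'m \<Rightarrow> real" where
  "mnorm A = onorm (\<lambda>x. A *v x)"

definition cmat :: "real^'n^'n \<Rightarrow> complex^'n^'n" where
  "cmat A = (\<chi> i j. complex_of_real (A $ i $ j))"

definition spectral_radius :: "real^'n^'n \<Rightarrow> real" where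
  "spectral_radius A = Max {cmod l | l. \<exists>v::complex^'n. v \<noteq> 0 \<and> cmat A *v v = l *s v}"

definition mpow :: "real^'n^'n \<Rightarrow> nat \<Rightarrow> real^'n^'n" where
  "mpow A i = (((**) A) ^^ i) (mat 1)"

definition controllable :: "real^'n^'n \<Rightarrow> real^'m^'n \<Rightarrow> bool" where
  "controllable A B \<longleftrightarrow>
     span (\<Union>i\<in>{..<CARD('n)}. range (\<lambda>u. (mpow A i ** B) *v u)) = UNIV"

text \<open>Nondegenerate centred multivariate Gaussian N(0,W) (Cramer-Wold definition):
  every nonzero linear functional c.X is normal with mean 0 and variance c^T W c.\<close>
definition gaussian_vec :: "'a measure \<Rightarrow> ('a \<Rightarrow> real^'n) \<Rightarrow> real^'n^'n \<Rightarrow> bool" where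
  "gaussian_vec \<Omega> X W \<longleftrightarrow> X \<in> borel_measurable \<Omega> \<and>
     (\<forall>c. c \<noteq> 0 \<longrightarrow>
        distributed \<Omega> lborel (\<lambda>\<omega>. c \<bullet> X \<omega>) (normal_density 0 (sqrt (c \<bullet> (W *v c)))))"

definition ctrl_input :: "real^'n^'m \<Rightarrow> real^'n^'m \<Rightarrow> real \<Rightarrow> real^'n \<Rightarrow> nat \<Rightarrow> real^'m" where
  "ctrl_input K0 K1 Mth x xi =
     (if xi > 0 then K0 *v x else if norm x \<ge> Mth then K0 *v x else K1 *v x)"

definition counter_next :: "real \<Rightarrow> nat \<Rightarrow> real^'n \<Rightarrow> nat \<Rightarrow> nat" where
  "counter_next Mth t x xi =
     (if xi > 0 then xi - 1 else if norm x \<ge> Mth then t - 1 else 0)"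

primrec traj :: "real^'n^'n \<Rightarrow> real^'m^'n \<Rightarrow> real^'n^'m \<Rightarrow> real^'n^'m \<Rightarrow> real \<Rightarrow> nat
                 \<Rightarrow> (nat \<Rightarrow> real^'n) \<Rightarrow> nat \<Rightarrow> (real^'n) \<times> nat" where
  "traj A B K0 K1 Mth t w 0 = (0, 0)"
| "traj A B K0 K1 Mth t w (Suc k) =
     (let x = fst (traj A B K0 K1 Mth t w k); xi = snd (traj A B K0 K1 Mth t w k) in
      (A *v x + B *v ctrl_input K0 K1 Mth x xi + w k, counter_next Mth t x xi))"

end

theory Submission
  imports Defs
begin

text \<open>
  Let \<open>y k = A x k + B u k\<close> be the noise-free part of the closed loop, so that
  \<open>x (k+1) = y k + w k\<close>. Pointwise \<open>y k \<bullet> P0 y k \<le> \<rho>0 V k + M\<^sup>2 \<A>\<^sup>2 \<parallel>P0\<parallel>\<close>: while \<open>K0\<close>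
  acts this is the Lyapunov inequality for \<open>A + B K0\<close>, and when \<open>K1\<close> acts, \<open>\<parallel>x k\<parallel> < M\<close>.
  Since \<open>y k\<close> depends only on \<open>w 0, \<dots>, w (k-1)\<close>, it is independent of the centred Gaussian
  \<open>w k\<close>, so \<open>E V (k+1) = E (y k \<bullet> P0 y k) + tr (W P0)\<close>. For the numerator \<open>C\<close> of the
  bound this gives \<open>E V (k+1) \<le> \<rho>0 E V k + C\<close>, which with \<open>V 0 = 0\<close> yields \<open>E V k \<le> C (1 - \<rho>0\<^sup>k) / (1 - \<rho>0)\<close>,
  strictly below \<open>C / (1 - \<rho>0)\<close> because \<open>tr (W P0) > 0\<close>.
\<close>

lemma posdef_quadratic_form_nonneg: "posdef P \<Longrightarrow> 0 \<le> x \<bullet> (P *v x)"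
  unfolding posdef_def by (cases "x = 0") (auto intro: less_imp_le)

lemma symmetric_matrix_inner_commute:
  fixes P :: "real^'n^'n"
  assumes "transpose P = P"
  shows "x \<bullet> (P *v y) = y \<bullet> (P *v x)"
  by (metis assms dot_lmul_matrix inner_commute transpose_matrix_vector)

lemma quadratic_form_transpose_mult:
  fixes C P :: "real^'n^'n"
  shows "x \<bullet> ((transpose C ** P ** C) *v x) = (C *v x) \<bullet> (P *v (C *v x))"
  by (metis dot_lmul_matrix matrix_vector_mul_assoc vector_transpose_matrix)

lemma quadratic_form_eq_sum_rows:
  fixes P :: "real^'n^'n"
  shows "x \<bullet> (P *v x) = (\<Sum>i\<in>UNIV. (axis i 1 \<bullet> x) * (P $ i \<bullet> x))"
proof -
  have "(P *v x) $ i = P $ i \<bullet> x" for i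
    by (simp add: matrix_vector_mult_def inner_vec_def)
  then show ?thesis
    by (simp add: inner_vec_def[of x "P *v x"] inner_axis')
qed

lemma trace_mult_eq_sum_rows:
  fixes W P :: "real^'n^'n"
  assumes "transpose P = P"
  shows "trace (W ** P) = (\<Sum>i\<in>UNIV. axis i 1 \<bullet> (W *v P $ i))"
proof -
  have "P $ i $ j = P $ j $ i" for i j
    using assms by (metis transpose_def vec_lambda_beta)
  then show ?thesis
    by (simp add: trace_def matrix_matrix_mult_def matrix_vector_mult_def inner_axis' mult.commute)
qed

lemma mnorm_nonneg: "0 \<le> mnorm (K::real^'n^'m)"
  unfolding mnorm_def by (rule onorm_pos_le) simp

lemma norm_matrix_vector_le_mnorm: "norm ((K::real^'n^'m) *v x) \<le> mnorm K * norm x"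
  unfolding mnorm_def by (rule onorm) simp

lemma quadratic_form_le_mnorm: "x \<bullet> (P *v x) \<le> mnorm P * (norm x)\<^sup>2"
proof -
  have "x \<bullet> (P *v x) \<le> norm x * norm (P *v x)" by (rule norm_cauchy_schwarz)
  also have "\<dots> \<le> norm x * (mnorm P * norm x)"
    by (intro mult_left_mono norm_matrix_vector_le_mnorm) auto
  finally show ?thesis by (simp add: power2_eq_square ac_simps)
qed

lemma borel_measurable_matrix_vector_mult [measurable (raw)]:
  fixes K :: "real^'n^'m"
  assumes "f \<in> borel_measurable N"
  shows "(\<lambda>\<omega>. K *v f \<omega>) \<in> borel_measurable N"
  using assms by (rule measurable_compose)
    (intro borel_measurable_continuous_onI linear_continuous_on matrix_vector_mul_bounded_linear)

context prob_space
begin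

lemma gaussian_vec_borel_measurable: "gaussian_vec M X W \<Longrightarrow> X \<in> borel_measurable M"
  unfolding gaussian_vec_def by simp

lemma gaussian_vec_inner_moments:
  assumes X: "gaussian_vec M X W" and W: "posdef W"
  shows "integrable M (\<lambda>\<omega>. c \<bullet> X \<omega>)"
    and "(\<integral>\<omega>. c \<bullet> X \<omega> \<partial>M) = 0"
    and "integrable M (\<lambda>\<omega>. (c \<bullet> X \<omega>)\<^sup>2)"
    and "(\<integral>\<omega>. (c \<bullet> X \<omega>)\<^sup>2 \<partial>M) = c \<bullet> (W *v c)"
proof -
  have "integrable M (\<lambda>\<omega>. c \<bullet> X \<omega>) \<and> (\<integral>\<omega>. c \<bullet> X \<omega> \<partial>M) = 0 \<and>
    integrable M (\<lambda>\<omega>. (c \<bullet> X \<omega>)\<^sup>2) \<and> (\<integral>\<omega>. (c \<bullet> X \<omega>)\<^sup>2 \<partial>M) = c \<bullet> (W *v c)"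
  proof (cases "c = 0")
    case False
    define s where "s = sqrt (c \<bullet> (W *v c))"
    have "c \<bullet> (W *v c) > 0" using W False unfolding posdef_def by auto
    then have s: "s > 0" and s2: "s\<^sup>2 = c \<bullet> (W *v c)" unfolding s_def by auto
    have D: "distributed M lborel (\<lambda>\<omega>. c \<bullet> X \<omega>) (normal_density 0 s)"
      using X False unfolding gaussian_vec_def s_def by auto
    show ?thesis
      using distributed_integrable[OF D, of "\<lambda>x. x"] integrable_normal_moment_nz_1[OF s, of 0]
        normal_distributed_expectation[OF s D]
        distributed_integrable[OF D, of "\<lambda>x. x\<^sup>2"] integrable_normal_moment[OF s, of 0 2]
        distributed_integral[OF D, of "\<lambda>x. x\<^sup>2"] integral_normal_moment_even[OF s, of 0 1] s2
      by simp
  qed simp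
  then show "integrable M (\<lambda>\<omega>. c \<bullet> X \<omega>)" "(\<integral>\<omega>. c \<bullet> X \<omega> \<partial>M) = 0"
    "integrable M (\<lambda>\<omega>. (c \<bullet> X \<omega>)\<^sup>2)" "(\<integral>\<omega>. (c \<bullet> X \<omega>)\<^sup>2 \<partial>M) = c \<bullet> (W *v c)"
    by auto
qed

lemma gaussian_vec_covariance:
  assumes X: "gaussian_vec M X W" and W: "posdef W"
  shows "integrable M (\<lambda>\<omega>. (c \<bullet> X \<omega>) * (d \<bullet> X \<omega>))"
    and "(\<integral>\<omega>. (c \<bullet> X \<omega>) * (d \<bullet> X \<omega>) \<partial>M) = c \<bullet> (W *v d)"
proof -
  have polarization: "(\<lambda>\<omega>. (c \<bullet> X \<omega>) * (d \<bullet> X \<omega>)) =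
      (\<lambda>\<omega>. ((c + d) \<bullet> X \<omega>)\<^sup>2 / 4 - ((c - d) \<bullet> X \<omega>)\<^sup>2 / 4)"
    by (simp add: inner_add_left inner_diff_left power2_eq_square field_simps)
  note plus = gaussian_vec_inner_moments[OF X W, of "c + d"]
    and minus = gaussian_vec_inner_moments[OF X W, of "c - d"]
  have "d \<bullet> (W *v c) = c \<bullet> (W *v d)"
    using W unfolding posdef_def by (metis symmetric_matrix_inner_commute)
  then have "(c + d) \<bullet> (W *v (c + d)) / 4 - (c - d) \<bullet> (W *v (c - d)) / 4 = c \<bullet> (W *v d)"
    by (simp add: matrix_vector_right_distrib matrix_vector_mult_diff_distrib
        inner_add_left inner_add_right inner_diff_left inner_diff_right field_simps)
  then show "integrable M (\<lambda>\<omega>. (c \<bullet> X \<omega>) * (d \<bullet> X \<omega>))"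
    "(\<integral>\<omega>. (c \<bullet> X \<omega>) * (d \<bullet> X \<omega>) \<partial>M) = c \<bullet> (W *v d)"
    unfolding polarization using plus minus by auto
qed

lemma gaussian_vec_quadratic_form:
  assumes X: "gaussian_vec M X W" and W: "posdef W" and P: "transpose P = P"
  shows "integrable M (\<lambda>\<omega>. (a + X \<omega>) \<bullet> (P *v (a + X \<omega>)))"
    and "(\<integral>\<omega>. (a + X \<omega>) \<bullet> (P *v (a + X \<omega>)) \<partial>M) = a \<bullet> (P *v a) + trace (W ** P)"
proof -
  let ?S = "\<lambda>\<omega>. \<Sum>i\<in>UNIV. (axis i 1 \<bullet> X \<omega>) * (P $ i \<bullet> X \<omega>)"
  have expand: "(a + X \<omega>) \<bullet> (P *v (a + X \<omega>)) = a \<bullet> (P *v a) + 2 * ((P *v a) \<bullet> X \<omega>) + ?S \<omega>" for \<omega>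
  proof -
    have "(a + X \<omega>) \<bullet> (P *v (a + X \<omega>))
        = a \<bullet> (P *v a) + a \<bullet> (P *v X \<omega>) + X \<omega> \<bullet> (P *v a) + X \<omega> \<bullet> (P *v X \<omega>)"
      by (simp add: matrix_vector_right_distrib inner_add_left inner_add_right)
    also have "\<dots> = a \<bullet> (P *v a) + 2 * ((P *v a) \<bullet> X \<omega>) + X \<omega> \<bullet> (P *v X \<omega>)"
      using symmetric_matrix_inner_commute[OF P, of a "X \<omega>"] by (simp add: inner_commute)
    finally show ?thesis
      unfolding quadratic_form_eq_sum_rows[of "X \<omega>" P, symmetric] .
  qed
  note linear = gaussian_vec_inner_moments[OF X W, of "P *v a"]
    and covariance = gaussian_vec_covariance[OF X W]
  have "integrable M ?S" "(\<integral>\<omega>. ?S \<omega> \<partial>M) = trace (W ** P)"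
    using covariance by (auto simp: trace_mult_eq_sum_rows[OF P])
  then show "integrable M (\<lambda>\<omega>. (a + X \<omega>) \<bullet> (P *v (a + X \<omega>)))"
    "(\<integral>\<omega>. (a + X \<omega>) \<bullet> (P *v (a + X \<omega>)) \<partial>M) = a \<bullet> (P *v a) + trace (W ** P)"
    using linear by (simp_all add: expand prob_space)
qed

text \<open>The Gaussian only serves as a witness: \<open>tr (W P) = E (X \<bullet> P X)\<close>, and \<open>X = 0\<close> a.s. would contradict
  \<open>Var (1 \<bullet> X) > 0\<close>.\<close>

lemma gaussian_vec_trace_pos:
  fixes X :: "'a \<Rightarrow> real^'n" and W P :: "real^'n^'n"
  assumes X: "gaussian_vec M X W" and W: "posdef W" and P: "posdef P"
  shows "0 < trace (W ** P)"
proof (rule ccontr)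
  assume "\<not> 0 < trace (W ** P)"
  moreover have "integrable M (\<lambda>\<omega>. X \<omega> \<bullet> (P *v X \<omega>))"
    and "(\<integral>\<omega>. X \<omega> \<bullet> (P *v X \<omega>) \<partial>M) = trace (W ** P)"
    using gaussian_vec_quadratic_form[OF X W, of P 0] P by (auto simp: posdef_def)
  moreover have "0 \<le> (\<integral>\<omega>. X \<omega> \<bullet> (P *v X \<omega>) \<partial>M)"
    using posdef_quadratic_form_nonneg[OF P] by (intro integral_nonneg_AE) auto
  ultimately have "AE \<omega> in M. X \<omega> \<bullet> (P *v X \<omega>) = 0"
    using integral_nonneg_eq_0_iff_AE posdef_quadratic_form_nonneg[OF P] by auto
  then have "AE \<omega> in M. X \<omega> = 0"
    by (rule eventually_mono) (use P in \<open>force simp: posdef_def\<close>)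
  then have "AE \<omega> in M. (1 \<bullet> X \<omega>)\<^sup>2 = (0::real)"
    by eventually_elim simp
  then have "(\<integral>\<omega>. (1 \<bullet> X \<omega>)\<^sup>2 \<partial>M) = (\<integral>\<omega>. 0 \<partial>M)"
    using gaussian_vec_borel_measurable[OF X] by (intro integral_cong_AE) auto
  moreover have "(1::real^'n) \<bullet> (W *v 1) > 0"
    using W unfolding posdef_def by (auto simp: vec_eq_iff)
  ultimately show False
    using gaussian_vec_inner_moments(4)[OF X W, of 1] by simp
qed

lemma nn_integral_quadratic_form_indep_gaussian:
  fixes X Y :: "'a \<Rightarrow> real^'n" and W P :: "real^'n^'n"
  assumes indep: "indep_var borel Y borel X"
    and X: "gaussian_vec M X W" and W: "posdef W" and P: "posdef P"
  shows "(\<integral>\<^sup>+\<omega>. ennreal ((Y \<omega> + X \<omega>) \<bullet> (P *v (Y \<omega> + X \<omega>))) \<partial>M)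
       = (\<integral>\<^sup>+\<omega>. ennreal (Y \<omega> \<bullet> (P *v Y \<omega>) + trace (W ** P)) \<partial>M)"
proof -
  have [measurable]: "Y \<in> borel_measurable M" "X \<in> borel_measurable M"
    using indep by (auto intro: indep_var_rv1 indep_var_rv2)
  let ?DY = "distr M borel Y" and ?DX = "distr M borel X"
  interpret DX: prob_space ?DX by (rule prob_space_distr) simp
  define h where "h p = ennreal ((fst p + snd p) \<bullet> (P *v (fst p + snd p)))" for p :: "(real^'n) \<times> (real^'n)"
  have [measurable]: "h \<in> borel_measurable (borel \<Otimes>\<^sub>M borel)" unfolding h_def by measurable
  have inner: "(\<integral>\<^sup>+b. h (a, b) \<partial>?DX) = ennreal (a \<bullet> (P *v a) + trace (W ** P))" for a
  proof -
    note moments = gaussian_vec_quadratic_form[OF X W, of P a]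
    have "(\<integral>\<^sup>+b. h (a, b) \<partial>?DX) = (\<integral>\<^sup>+\<omega>. ennreal ((a + X \<omega>) \<bullet> (P *v (a + X \<omega>))) \<partial>M)"
      by (subst nn_integral_distr) (auto simp: h_def)
    also have "\<dots> = ennreal (a \<bullet> (P *v a) + trace (W ** P))"
      using moments P posdef_quadratic_form_nonneg[OF P]
      by (subst nn_integral_eq_integral) (auto simp: posdef_def)
    finally show ?thesis .
  qed
  have "(\<integral>\<^sup>+\<omega>. ennreal ((Y \<omega> + X \<omega>) \<bullet> (P *v (Y \<omega> + X \<omega>))) \<partial>M) = (\<integral>\<^sup>+\<omega>. h (Y \<omega>, X \<omega>) \<partial>M)"
    by (simp add: h_def)
  also have "\<dots> = integral\<^sup>N (distr M (borel \<Otimes>\<^sub>M borel) (\<lambda>\<omega>. (Y \<omega>, X \<omega>))) h"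
    by (subst nn_integral_distr) auto
  also have "\<dots> = integral\<^sup>N (?DY \<Otimes>\<^sub>M ?DX) h"
    using indep by (simp add: indep_var_distribution_eq)
  also have "\<dots> = (\<integral>\<^sup>+a. \<integral>\<^sup>+b. h (a, b) \<partial>?DX \<partial>?DY)"
    by (subst DX.nn_integral_fst) (auto cong: measurable_cong_sets)
  also have "\<dots> = (\<integral>\<^sup>+\<omega>. ennreal (Y \<omega> \<bullet> (P *v Y \<omega>) + trace (W ** P)) \<partial>M)"
    by (simp add: inner nn_integral_distr)
  finally show ?thesis .
qed

end

lemma ennreal_affine_recurrence_bound:
  fixes e :: "nat \<Rightarrow> ennreal" and r C :: real
  assumes "e 0 = 0" and step: "\<And>k. e (Suc k) \<le> ennreal r * e k + ennreal C"
    and r: "0 \<le> r" "r < 1" and C: "0 \<le> C"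
  shows "e k \<le> ennreal (C * (1 - r ^ k) / (1 - r))"
proof (induction k)
  case 0
  then show ?case using assms(1) by simp
next
  case (Suc k)
  have "ennreal r * e k \<le> ennreal r * ennreal (C * (1 - r ^ k) / (1 - r))"
    using Suc by (rule mult_left_mono) simp
  then have "e (Suc k) \<le> ennreal r * ennreal (C * (1 - r ^ k) / (1 - r)) + ennreal C"
    using step[of k] by (meson add_right_mono order_trans)
  also have "\<dots> = ennreal (r * (C * (1 - r ^ k) / (1 - r)) + C)"
    using r C by (simp add: power_le_one ennreal_mult[symmetric] del: ennreal_plus add: ennreal_plus[symmetric])
  also have "r * (C * (1 - r ^ k) / (1 - r)) + C = C * (1 - r ^ Suc k) / (1 - r)"
    using r by (simp add: field_simps)
  finally show ?case .
qed

definition noiseless_step ::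
    "real^'n^'n \<Rightarrow> real^'m^'n \<Rightarrow> real^'n^'m \<Rightarrow> real^'n^'m \<Rightarrow> real \<Rightarrow> (real^'n) \<times> nat \<Rightarrow> real^'n" where
  "noiseless_step A B K0 K1 Mth z = A *v fst z + B *v ctrl_input K0 K1 Mth (fst z) (snd z)"

lemma traj_Suc_state:
  "fst (traj A B K0 K1 Mth t w (Suc k)) = noiseless_step A B K0 K1 Mth (traj A B K0 K1 Mth t w k) + w k"
  by (simp add: noiseless_step_def Let_def)

lemma traj_cong:
  "(\<And>j. j < k \<Longrightarrow> w j = w' j) \<Longrightarrow> traj A B K0 K1 Mth t w k = traj A B K0 K1 Mth t w' k"
  by (induction k) (auto simp: Let_def)

lemma noiseless_step_measurable:
  assumes [measurable]: "(\<lambda>\<omega>. fst (z \<omega>)) \<in> borel_measurable N" "(\<lambda>\<omega>. snd (z \<omega>)) \<in> measurable N (count_space UNIV)"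
  shows "(\<lambda>\<omega>. noiseless_step A B K0 K1 Mth (z \<omega>)) \<in> borel_measurable N"
  unfolding noiseless_step_def ctrl_input_def by measurable

lemma traj_measurable:
  assumes "\<And>j. j < k \<Longrightarrow> (\<lambda>\<omega>. f \<omega> j) \<in> borel_measurable N"
  shows "(\<lambda>\<omega>. fst (traj A B K0 K1 Mth t (f \<omega>) k)) \<in> borel_measurable N"
    and "(\<lambda>\<omega>. snd (traj A B K0 K1 Mth t (f \<omega>) k)) \<in> measurable N (count_space UNIV)"
proof -
  have "(\<lambda>\<omega>. fst (traj A B K0 K1 Mth t (f \<omega>) k)) \<in> borel_measurable N \<and>
      (\<lambda>\<omega>. snd (traj A B K0 K1 Mth t (f \<omega>) k)) \<in> measurable N (count_space UNIV)"
    using assms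
  proof (induction k)
    case (Suc k)
    let ?z = "\<lambda>\<omega>. traj A B K0 K1 Mth t (f \<omega>) k"
    have [measurable]: "(\<lambda>\<omega>. fst (?z \<omega>)) \<in> borel_measurable N"
      "(\<lambda>\<omega>. snd (?z \<omega>)) \<in> measurable N (count_space UNIV)" "(\<lambda>\<omega>. f \<omega> k) \<in> borel_measurable N"
      using Suc by auto
    have [measurable]: "(\<lambda>\<omega>. noiseless_step A B K0 K1 Mth (?z \<omega>)) \<in> borel_measurable N"
      by (rule noiseless_step_measurable) measurable
    have "(\<lambda>\<omega>. noiseless_step A B K0 K1 Mth (?z \<omega>) + f \<omega> k) \<in> borel_measurable N"
      by measurable
    moreover have "(\<lambda>\<omega>. counter_next Mth t (fst (?z \<omega>)) (snd (?z \<omega>))) \<in> measurable N (count_space UNIV)"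
      unfolding counter_next_def by measurable
    ultimately show ?case
      by (simp add: traj_Suc_state del: traj.simps) (simp add: Let_def)
  qed simp
  then show "(\<lambda>\<omega>. fst (traj A B K0 K1 Mth t (f \<omega>) k)) \<in> borel_measurable N"
    "(\<lambda>\<omega>. snd (traj A B K0 K1 Mth t (f \<omega>) k)) \<in> measurable N (count_space UNIV)"
    by auto
qed

lemma noiseless_step_lyapunov_bound:
  fixes A :: "real^'n^'n" and B :: "real^'m^'n" and K0 K1 :: "real^'n^'m"
    and Mth :: real and z :: "(real^'n) \<times> nat"
  assumes P0: "posdef P0" and rho0: "0 \<le> rho0"
    and lyap: "posdef (rho0 *\<^sub>R P0 - transpose (A + B ** K0) ** P0 ** (A + B ** K0))"
  defines "y \<equiv> noiseless_step A B K0 K1 Mth z"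
  shows "y \<bullet> (P0 *v y) \<le> rho0 * (fst z \<bullet> (P0 *v fst z))
           + Mth\<^sup>2 * (max (mnorm (A + B ** K0)) (mnorm (A + B ** K1)))\<^sup>2 * mnorm P0"
proof -
  let ?x = "fst z" and ?m = "max (mnorm (A + B ** K0)) (mnorm (A + B ** K1))"
  have closed_loop: "A *v ?x + B *v (K *v ?x) = (A + B ** K) *v ?x" for K :: "real^'n^'m"
    by (simp add: matrix_vector_mult_add_rdistrib matrix_vector_mul_assoc)
  show ?thesis
  proof (cases "snd z > 0 \<or> norm ?x \<ge> Mth")
    case True
    then have "y = (A + B ** K0) *v ?x"
      unfolding y_def noiseless_step_def ctrl_input_def using closed_loop by auto
    moreover have "0 \<le> ?x \<bullet> ((rho0 *\<^sub>R P0 - transpose (A + B ** K0) ** P0 ** (A + B ** K0)) *v ?x)"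
      by (rule posdef_quadratic_form_nonneg[OF lyap])
    ultimately have "y \<bullet> (P0 *v y) \<le> rho0 * (?x \<bullet> (P0 *v ?x))"
      by (simp add: matrix_vector_mult_diff_rdistrib quadratic_form_transpose_mult inner_diff_right
          flip: scaleR_matrix_vector_assoc)
    then show ?thesis using mnorm_nonneg[of P0] by (simp add: add_increasing2)
  next
    case False
    then have y: "y = (A + B ** K1) *v ?x" and small: "norm ?x < Mth"
      unfolding y_def noiseless_step_def ctrl_input_def using closed_loop by auto
    have "norm y \<le> mnorm (A + B ** K1) * norm ?x"
      unfolding y by (rule norm_matrix_vector_le_mnorm)
    also have "\<dots> \<le> ?m * Mth"
      using small mnorm_nonneg[of "A + B ** K1"] by (intro mult_mono) auto
    finally have "norm y \<le> ?m * Mth" .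
    then have "y \<bullet> (P0 *v y) \<le> mnorm P0 * (?m * Mth)\<^sup>2"
      using quadratic_form_le_mnorm[of y P0] mnorm_nonneg[of P0]
      by (meson norm_ge_zero order_trans mult_left_mono power_mono)
    moreover have "0 \<le> rho0 * (?x \<bullet> (P0 *v ?x))"
      using rho0 posdef_quadratic_form_nonneg[OF P0] by simp
    ultimately show ?thesis by (simp add: power_mult_distrib ac_simps)
  qed
qed

context prob_space
begin

lemma indep_var_noiseless_step_noise:
  fixes w :: "nat \<Rightarrow> 'a \<Rightarrow> real^'n" and A :: "real^'n^'n" and B :: "real^'m^'n"
    and K0 K1 :: "real^'n^'m"
  assumes indep: "indep_vars (\<lambda>_. borel) w UNIV"
  shows "indep_var borel (\<lambda>\<omega>. noiseless_step A B K0 K1 Mth (traj A B K0 K1 Mth t (\<lambda>j. w j \<omega>) k))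
           borel (w k)"
proof -
  define G where "G f = noiseless_step A B K0 K1 Mth (traj A B K0 K1 Mth t f k)" for f :: "nat \<Rightarrow> real^'n"
  have G: "G \<in> borel_measurable (PiM {..<k} (\<lambda>_. borel))"
    unfolding G_def
    by (intro noiseless_step_measurable traj_measurable measurable_component_singleton) auto
  have "traj A B K0 K1 Mth t (\<lambda>j. w j \<omega>) k = traj A B K0 K1 Mth t (restrict (\<lambda>j. w j \<omega>) {..<k}) k" for \<omega>
    by (rule traj_cong) simp
  then have past: "(\<lambda>\<omega>. noiseless_step A B K0 K1 Mth (traj A B K0 K1 Mth t (\<lambda>j. w j \<omega>) k))
      = G \<circ> (\<lambda>\<omega>. restrict (\<lambda>j. w j \<omega>) {..<k})"
    by (simp add: G_def o_def)
  have present: "w k = (\<lambda>f. f k) \<circ> (\<lambda>\<omega>. restrict (\<lambda>j. w j \<omega>) {k})"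
    by auto
  show ?thesis
    unfolding past present
    by (rule indep_var_compose[OF indep_var_restrict[OF indep] G])
      (auto intro: measurable_component_singleton)
qed

lemma nn_integral_lyapunov_step:
  fixes w :: "nat \<Rightarrow> 'a \<Rightarrow> real^'n" and A :: "real^'n^'n" and B :: "real^'m^'n"
    and K0 K1 :: "real^'n^'m" and W P0 :: "real^'n^'n" and Mth rho0 :: real and t :: nat
  assumes indep: "indep_vars (\<lambda>_. borel) w UNIV" and noise: "\<And>k. gaussian_vec M (w k) W"
    and W: "posdef W" and P0: "posdef P0" and rho0: "0 \<le> rho0"
    and lyap: "posdef (rho0 *\<^sub>R P0 - transpose (A + B ** K0) ** P0 ** (A + B ** K0))"
  defines "V \<equiv> \<lambda>k \<omega>. let x = fst (traj A B K0 K1 Mth t (\<lambda>j. w j \<omega>) k) in x \<bullet> (P0 *v x)"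
    and "C \<equiv> Mth\<^sup>2 * (max (mnorm (A + B ** K0)) (mnorm (A + B ** K1)))\<^sup>2 * mnorm P0 + trace (W ** P0)"
  shows "(\<integral>\<^sup>+\<omega>. ennreal (V (Suc k) \<omega>) \<partial>M) \<le> ennreal rho0 * (\<integral>\<^sup>+\<omega>. ennreal (V k \<omega>) \<partial>M) + ennreal C"
proof -
  let ?y = "\<lambda>\<omega>. noiseless_step A B K0 K1 Mth (traj A B K0 K1 Mth t (\<lambda>j. w j \<omega>) k)"
  have [measurable]: "w j \<in> borel_measurable M" for j
    using noise by (rule gaussian_vec_borel_measurable)
  have [measurable]: "V k \<in> borel_measurable M"
    using traj_measurable(1)[of k "\<lambda>\<omega> j. w j \<omega>" M] unfolding V_def Let_def by measurable
  have "(\<integral>\<^sup>+\<omega>. ennreal (V (Suc k) \<omega>) \<partial>M)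
      = (\<integral>\<^sup>+\<omega>. ennreal (?y \<omega> \<bullet> (P0 *v ?y \<omega>) + trace (W ** P0)) \<partial>M)"
    unfolding V_def Let_def traj_Suc_state
    by (rule nn_integral_quadratic_form_indep_gaussian[OF indep_var_noiseless_step_noise[OF indep] noise W P0])
  also have "\<dots> \<le> (\<integral>\<^sup>+\<omega>. ennreal rho0 * ennreal (V k \<omega>) + ennreal C \<partial>M)"
  proof (intro nn_integral_mono)
    fix \<omega>
    have "0 \<le> V k \<omega>"
      unfolding V_def Let_def by (rule posdef_quadratic_form_nonneg[OF P0])
    moreover have "0 \<le> C"
      unfolding C_def using mnorm_nonneg[of P0] gaussian_vec_trace_pos[OF noise W P0] by simp
    moreover have "?y \<omega> \<bullet> (P0 *v ?y \<omega>) + trace (W ** P0) \<le> rho0 * V k \<omega> + C"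
      using noiseless_step_lyapunov_bound[OF P0 rho0 lyap] unfolding V_def C_def Let_def by fastforce
    ultimately show "ennreal (?y \<omega> \<bullet> (P0 *v ?y \<omega>) + trace (W ** P0)) \<le> ennreal rho0 * ennreal (V k \<omega>) + ennreal C"
      using rho0 by (simp add: ennreal_mult'[symmetric] ennreal_plus[symmetric] ennreal_leI del: ennreal_plus)
  qed
  also have "\<dots> = ennreal rho0 * (\<integral>\<^sup>+\<omega>. ennreal (V k \<omega>) \<partial>M) + ennreal C"
    by (simp add: nn_integral_add nn_integral_cmult emeasure_space_1)
  finally show ?thesis .
qed

end

theorem lemma1:
  fixes \<Omega> :: "'a measure"
    and w :: "nat \<Rightarrow> 'a \<Rightarrow> real^'n"
    and A :: "real^'n^'n" and B :: "real^'m^'n"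
    and K0 K1 :: "real^'n^'m"
    and W P0 :: "real^'n^'n"
    and Mth rho0 :: real and t :: nat
  assumes "prob_space \<Omega>"
    and "controllable A B"
    and "posdef W"
    and "prob_space.indep_vars \<Omega> (\<lambda>_. borel) w UNIV"
    and "\<And>k. gaussian_vec \<Omega> (w k) W"
    and "spectral_radius (A + B ** K0) < 1"
    and "Mth > 0" and "t \<ge> 1"
    and "posdef P0" and "0 < rho0" and "rho0 < 1"
    and "posdef (rho0 *\<^sub>R P0 - transpose (A + B ** K0) ** P0 ** (A + B ** K0))"
  shows "(\<integral>\<^sup>+ \<omega>. ennreal (let x = fst (traj A B K0 K1 Mth t (\<lambda>j. w j \<omega>) k) in x \<bullet> (P0 *v x)) \<partial>\<Omega>)
         < ennreal ((Mth\<^sup>2 * (max (mnorm (A + B ** K0)) (mnorm (A + B ** K1)))\<^sup>2 * mnorm P0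
                     + trace (W ** P0)) / (1 - rho0))"
proof -
  interpret prob_space \<Omega> by fact
  define V where "V k \<omega> = (let x = fst (traj A B K0 K1 Mth t (\<lambda>j. w j \<omega>) k) in x \<bullet> (P0 *v x))" for k \<omega>
  define C where "C = Mth\<^sup>2 * (max (mnorm (A + B ** K0)) (mnorm (A + B ** K1)))\<^sup>2 * mnorm P0 + trace (W ** P0)"
  have C: "0 < C"
    unfolding C_def using mnorm_nonneg[of P0] gaussian_vec_trace_pos[OF assms(5,3,9)]
    by (simp add: add_nonneg_pos)
  have "(\<integral>\<^sup>+\<omega>. ennreal (V k \<omega>) \<partial>\<Omega>) \<le> ennreal (C * (1 - rho0 ^ k) / (1 - rho0))"
  proof (rule ennreal_affine_recurrence_bound[where e="\<lambda>k. \<integral>\<^sup>+\<omega>. ennreal (V k \<omega>) \<partial>\<Omega>"])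
    show "(\<integral>\<^sup>+\<omega>. ennreal (V (Suc k) \<omega>) \<partial>\<Omega>) \<le> ennreal rho0 * (\<integral>\<^sup>+\<omega>. ennreal (V k \<omega>) \<partial>\<Omega>) + ennreal C" for k
      unfolding V_def C_def using assms(3,4,5,9,10,12) by (intro nn_integral_lyapunov_step) auto
  qed (use C assms(10,11) in \<open>auto simp: V_def\<close>)
  also have "\<dots> < ennreal (C / (1 - rho0))"
    using C assms(10,11) by (intro ennreal_lessI) (auto simp: divide_strict_right_mono)
  finally show ?thesis unfolding V_def C_def .
qed

end
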